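(* Let $n\in\mathbb{N}$, let $X$ be a non-empty perfect Polish space, let $\pi$ be a balanced scheme of size $n$, and let $\mathcal{V}\subseteq\mathcal{U}(\pi)$ be a non-empty open subset of $\mathcal{K}(X)$. Then there exists a balanced scheme $\pi'$ of size $n+1$ which is consistent with $\pi$ and satisfies $\mathcal{U}(\pi')\subseteq\mathcal{V}$.
   Context: $\mathcal{K}(X)$ is the space of non-empty compact subsets of $X$ with the Hausdorff metric. Fix an onto map $\Psi$ from the positive odd integers to the set $\mathbb{N}^{<\omega}$ of finite sequences of natural numbers such that $\Psi(m)$ has at most $m$ coordinates for every odd $m$. Given positive integers $a_1,a_2,\dots$, let $\mathcal{I}_m=\prod_{k=1}^m\{1,\dots,a_k\}$. For $n\ge1$ and $(a_1,\dots,a_{2n-1})$ define $\Phi=\Phi_{a_1\dots a_{2n-1}}$ on $\{2k-1:1\le k\le n\}$ by $\Phi(2k-1)=\Psi(2k-1)$ if $\Psi(2k-1)\in\bigcup_{m=1}^{2k-1}\mathcal{I}_m$, and $\Phi(2k-1)=(1)\in\mathcal{I}_1$ otherwise. For $n\ge1$, a balanced scheme of size $n$ is a pair consisting of positive integers $(a_1,\dots,a_{2n})$ and non-empty open sets $U_{i_1\dots i_k}\subseteq X$ for $(i_1,\dots,i_k)\in\mathcal{I}_k$, $1\le k\le 2n$, such that there are positive reals $b_k$ with: (1) $a_1\ge2$ and $a_k\ge(k-1)a_1\cdots a_{k-1}$ for $2\le k\le 2n$; (2) $\overline{U_{i_1\dots i_k}}\subseteq U_{i_1\dots i_{k-1}}$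 for $2\le k\le 2n$; (3) $\operatorname{diam}U_{i_1\dots i_k}\le b_k$ for $1\le k\le 2n$; (4) $\operatorname{dist}(U_{i_1\dots i_k},U_{j_1\dots j_k})>2b_k$ whenever $(i_1,\dots,i_k)\ne(j_1,\dots,j_k)\in\mathcal{I}_k$, $1\le k\le 2n$; (5) with $\Phi=\Phi_{a_1\dots a_{2n-1}}$: if $k<2n$ is odd, $U_{i_1\dots i_k}\subseteq U_{\Phi(k)}$ and $U_{j_1\dots j_k}\not\subseteq U_{\Phi(k)}$, then for all $s\ne t$ in $\{1,\dots,a_{k+1}\}$, $\operatorname{dist}(U_{i_1\dots i_k s},U_{i_1\dots i_k t})>\operatorname{diam}\bigl(\bigcup_{j_{k+1}=1}^{a_{k+1}}U_{j_1\dots j_k j_{k+1}}\bigr)$. The balanced scheme of size $0$ is $(\emptyset,\emptyset)$. For a balanced scheme $\pi$ of size $n\ge1$, $\mathcal{U}(\pi)=\{K\in\mathcal{K}(X): K\subseteq\bigcup_{(i_1,\dots,i_{2n})\in\mathcal{I}_{2n}}U_{i_1\dots i_{2n}}$ and $K\cap U_{i_1\dots i_{2n}}\ne\emptyset$ for all $(i_1,\dots,i_{2n})\in\mathcal{I}_{2n}\}$; for size $0$, $\mathcal{U}(\pi)=\mathcal{K}(X)$. A balanced scheme $\pi'$ of size $n+1$ is consistent with a balanced scheme $\pi$ of size $n$ if $a_k(\pi')=a_k(\pi)$ and $U_{i_1\dots i_k}(\pi')=U_{i_1\dots i_k}(\pi)$ for all $k\le 2n$ and $(i_1,\dots,i_k)\in\mathcal{I}_k$.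 *)

theory Defs
  imports "HOL-Analysis.Analysis"
begin

text \<open>Finite sequences are lists; indices of a_k start at 1.
  I a m = prod_{k=1}^m {1..a_k}.\<close>
definition Iset :: "(nat \<Rightarrow> nat) \<Rightarrow> nat \<Rightarrow> nat list set" where
  "Iset a m = {xs. length xs = m \<and> (\<forall>j<m. 1 \<le> xs ! j \<and> xs ! j \<le> a (j + 1))}"

definition Phi :: "(nat \<Rightarrow> nat list) \<Rightarrow> (nat \<Rightarrow> nat) \<Rightarrow> nat \<Rightarrow> nat list" where
  "Phi Psi a k = (if (\<exists>m\<in>{1..k}. Psi k \<in> Iset a m) then Psi k else [1])"

definition hausdorff_dist :: "'a::metric_space set \<Rightarrow> 'a set \<Rightarrow> real" where
  "hausdorff_dist A B = max (SUP x\<in>A. infdist x B) (SUP y\<in>B. infdist y A)"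

definition Kspace :: "'a::metric_space set set" where
  "Kspace = {K. compact K \<and> K \<noteq> {}}"

definition K_open :: "'a::metric_space set set \<Rightarrow> bool" where
  "K_open V \<longleftrightarrow> V \<subseteq> Kspace \<and>
     (\<forall>K\<in>V. \<exists>e>0. \<forall>L\<in>Kspace. hausdorff_dist K L < e \<longrightarrow> L \<in> V)"

text \<open>A balanced scheme of size n is represented by (a, U); only a_1..a_{2n}
  and U on I_k (1 <= k <= 2n) are relevant. For n = 0 every pair represents
  the empty scheme.\<close>
definition balanced ::
  "(nat \<Rightarrow> nat list) \<Rightarrow> nat \<Rightarrow> (nat \<Rightarrow> nat) \<Rightarrow> (nat list \<Rightarrow> 'a::metric_space set) \<Rightarrow> bool" where
  "balanced Psi n a U \<longleftrightarrow> n = 0 \<or>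
    ((\<forall>k\<in>{1..2*n}. 0 < a k) \<and>
     (\<forall>k\<in>{1..2*n}. \<forall>s\<in>Iset a k. open (U s) \<and> U s \<noteq> {}) \<and>
     (\<exists>b :: nat \<Rightarrow> real. (\<forall>k\<in>{1..2*n}. 0 < b k) \<and>
        a 1 \<ge> 2 \<and>
        (\<forall>k\<in>{2..2*n}. a k \<ge> (k - 1) * (\<Prod>j\<in>{1..k-1}. a j)) \<and>
        (\<forall>k\<in>{2..2*n}. \<forall>s\<in>Iset a k. closure (U s) \<subseteq> U (butlast s)) \<and>
        (\<forall>k\<in>{1..2*n}. \<forall>s\<in>Iset a k. bounded (U s) \<and> diameter (U s) \<le> b k) \<and>
        (\<forall>k\<in>{1..2*n}. \<forall>s\<in>Iset a k. \<forall>t\<in>Iset a k. s \<noteq> t \<longrightarrow> setdist (U s) (U t) > 2 * b k) \<and>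
        (\<forall>k. odd k \<and> k < 2*n \<longrightarrow>
           (\<forall>s\<in>Iset a k. \<forall>t\<in>Iset a k.
              U s \<subseteq> U (Phi Psi a k) \<and> \<not> U t \<subseteq> U (Phi Psi a k) \<longrightarrow>
              (\<forall>p\<in>{1..a (k+1)}. \<forall>q\<in>{1..a (k+1)}. p \<noteq> q \<longrightarrow>
                 setdist (U (s @ [p])) (U (s @ [q]))
                   > diameter (\<Union>r\<in>{1..a (k+1)}. U (t @ [r])))))))"

definition Uscheme ::
  "nat \<Rightarrow> (nat \<Rightarrow> nat) \<Rightarrow> (nat list \<Rightarrow> 'a::metric_space set) \<Rightarrow> 'a set set" where
  "Uscheme n a U = (if n = 0 then Kspace else
     {K \<in> Kspace. K \<subseteq> (\<Union>s\<in>Iset a (2*n). U s) \<and> (\<forall>s\<in>Iset a (2*n). K \<inter> U s \<noteq> {})})"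

definition consistent ::
  "nat \<Rightarrow> (nat \<Rightarrow> nat) \<Rightarrow> (nat list \<Rightarrow> 'a set) \<Rightarrow> (nat \<Rightarrow> nat) \<Rightarrow> (nat list \<Rightarrow> 'a set) \<Rightarrow> bool" where
  "consistent n a U a' U' \<longleftrightarrow>
     (\<forall>k\<in>{1..2*n}. a' k = a k) \<and> (\<forall>k\<in>{1..2*n}. \<forall>s\<in>Iset a k. U' s = U s)"

end

theory Submission
  imports Defs
begin

text \<open>
  Given a balanced scheme \<open>\<pi>\<close> of size \<open>n\<close>
  and a non-empty open \<open>\<V> \<subseteq> \<U>(\<pi>)\<close>, pick \<open>K \<in> \<V>\<close> and \<open>e > 0\<close> such that the Hausdorff
  \<open>e\<close>-ball around \<open>K\<close> lies in \<open>\<V>\<close>.  Two new levels are added: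
  \<^item> level \<open>2n+1\<close>: many small, well separated balls inside each cell of level \<open>2n\<close>, centred
    near points of \<open>K\<close>, so that their centres form an \<open>e/4\<close>-net of \<open>K\<close>;
  \<^item> level \<open>2n+2\<close>: inside each such ball, children that are spread out if the ball lies in
    the cell indexed by \<open>\<Phi>(2n+1)\<close> and tightly clustered otherwise (condition (5)).
  Every compact set meeting all new cells and covered by them is then \<open>e/2\<close>-close to \<open>K\<close>.
\<close>

lemma Iset_length: "s \<in> Iset a k \<Longrightarrow> length s = k"
  by (simp add: Iset_def)

lemma Iset_0: "Iset a 0 = {[]}"
  by (auto simp: Iset_def)

lemma Iset_snoc: "s @ [i] \<in> Iset a (Suc k) \<longleftrightarrow> s \<in> Iset a k \<and> i \<in> {1..a (Suc k)}"
  unfolding Iset_def by (auto simp: nth_append less_Suc_eq split: if_splits)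

lemma Iset_Suc_cases:
  assumes "v \<in> Iset a (Suc k)"
  obtains s i where "v = s @ [i]" "s \<in> Iset a k" "i \<in> {1..a (Suc k)}"
proof -
  have "v = butlast v @ [last v]"
    using assms by (cases v rule: rev_cases) (auto simp: Iset_def)
  then show ?thesis
    using assms that Iset_snoc by metis
qed

lemma Iset_Suc: "Iset a (Suc k) = (\<lambda>(s, i). s @ [i]) ` (Iset a k \<times> {1..a (Suc k)})"
proof
  show "Iset a (Suc k) \<subseteq> (\<lambda>(s, i). s @ [i]) ` (Iset a k \<times> {1..a (Suc k)})"
    by (force elim: Iset_Suc_cases)
qed (use Iset_snoc in auto)

lemma Iset_Suc_iff: "v \<in> Iset a (Suc k) \<longleftrightarrow> (\<exists>s\<in>Iset a k. \<exists>i\<in>{1..a (Suc k)}. v = s @ [i])"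
  by (auto simp: Iset_Suc)

lemma butlast_Iset: "s \<in> Iset a (Suc k) \<Longrightarrow> butlast s \<in> Iset a k"
  by (erule Iset_Suc_cases) simp

lemma finite_Iset: "finite (Iset a k)"
  by (induction k) (auto simp: Iset_0 Iset_Suc)

lemma Iset_cong: "(\<And>j. j \<in> {1..k} \<Longrightarrow> a' j = a j) \<Longrightarrow> Iset a' k = Iset a k"
  unfolding Iset_def by (auto simp: Suc_le_eq)

lemma Phi_cong:
  assumes "\<And>j. j \<in> {1..k} \<Longrightarrow> a' j = a j"
  shows "Phi Psi a' k = Phi Psi a k"
proof -
  have "Iset a' m = Iset a m" if "m \<in> {1..k}" for m
    by (rule Iset_cong) (use assms that in auto)
  then show ?thesis
    unfolding Phi_def by auto
qed

lemma Phi_mem: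
  assumes "1 \<le> k" "1 \<le> a 1"
  shows "\<exists>m\<in>{1..k}. Phi Psi a k \<in> Iset a m"
  using assms unfolding Phi_def by (auto simp: Iset_def)

lemma Phi_length: "1 \<le> k \<Longrightarrow> length (Phi Psi a k) \<le> k"
  unfolding Phi_def by (auto simp: Iset_def)

definition growth :: "(nat \<Rightarrow> nat) \<Rightarrow> nat \<Rightarrow> bool" where
  "growth a k \<longleftrightarrow> 0 < a k \<and> (if k = 1 then 2 \<le> a 1 else (k - 1) * (\<Prod>j\<in>{1..k-1}. a j) \<le> a k)"

definition level_ok :: "(nat \<Rightarrow> nat) \<Rightarrow> (nat list \<Rightarrow> 'a::metric_space set) \<Rightarrow> nat \<Rightarrow> real \<Rightarrow> bool" where
  "level_ok a U k \<beta> \<longleftrightarrow> 0 < \<beta> \<and>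
     (\<forall>s\<in>Iset a k. open (U s) \<and> U s \<noteq> {} \<and> bounded (U s) \<and> diameter (U s) \<le> \<beta> \<and>
        (2 \<le> k \<longrightarrow> closure (U s) \<subseteq> U (butlast s))) \<and>
     (\<forall>s\<in>Iset a k. \<forall>t\<in>Iset a k. s \<noteq> t \<longrightarrow> 2 * \<beta> < setdist (U s) (U t))"

definition phi_separation ::
  "(nat \<Rightarrow> nat list) \<Rightarrow> (nat \<Rightarrow> nat) \<Rightarrow> (nat list \<Rightarrow> 'a::metric_space set) \<Rightarrow> nat \<Rightarrow> bool" where
  "phi_separation Psi a U k \<longleftrightarrow>
     (\<forall>s\<in>Iset a k. \<forall>t\<in>Iset a k. U s \<subseteq> U (Phi Psi a k) \<and> \<not> U t \<subseteq> U (Phi Psi a k) \<longrightarrow>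
        (\<forall>p\<in>{1..a (k+1)}. \<forall>q\<in>{1..a (k+1)}. p \<noteq> q \<longrightarrow>
           setdist (U (s @ [p])) (U (s @ [q])) > diameter (\<Union>r\<in>{1..a (k+1)}. U (t @ [r]))))"

lemma balanced_levels:
  assumes "0 < n"
  shows "balanced Psi n a U \<longleftrightarrow>
    (\<forall>k\<in>{1..2*n}. growth a k) \<and> (\<exists>b. \<forall>k\<in>{1..2*n}. level_ok a U k (b k)) \<and>
    (\<forall>k. odd k \<and> k < 2*n \<longrightarrow> phi_separation Psi a U k)"
proof
  assume "balanced Psi n a U"
  then obtain b where "(\<forall>k\<in>{1..2*n}. 0 < a k) \<and>
     (\<forall>k\<in>{1..2*n}. \<forall>s\<in>Iset a k. open (U s) \<and> U s \<noteq> {}) \<and>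
     (\<forall>k\<in>{1..2*n}. 0 < b k) \<and> a 1 \<ge> 2 \<and>
     (\<forall>k\<in>{2..2*n}. a k \<ge> (k - 1) * (\<Prod>j\<in>{1..k-1}. a j)) \<and>
     (\<forall>k\<in>{2..2*n}. \<forall>s\<in>Iset a k. closure (U s) \<subseteq> U (butlast s)) \<and>
     (\<forall>k\<in>{1..2*n}. \<forall>s\<in>Iset a k. bounded (U s) \<and> diameter (U s) \<le> b k) \<and>
     (\<forall>k\<in>{1..2*n}. \<forall>s\<in>Iset a k. \<forall>t\<in>Iset a k. s \<noteq> t \<longrightarrow> setdist (U s) (U t) > 2 * b k) \<and>
     (\<forall>k. odd k \<and> k < 2*n \<longrightarrow> phi_separation Psi a U k)"
    using assms unfolding balanced_def phi_separation_def by auto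
  then show "(\<forall>k\<in>{1..2*n}. growth a k) \<and> (\<exists>b. \<forall>k\<in>{1..2*n}. level_ok a U k (b k)) \<and>
    (\<forall>k. odd k \<and> k < 2*n \<longrightarrow> phi_separation Psi a U k)"
    unfolding growth_def level_ok_def by (auto intro!: exI[of _ b]) (meson atLeastAtMost_iff subsetD)
next
  assume "(\<forall>k\<in>{1..2*n}. growth a k) \<and> (\<exists>b. \<forall>k\<in>{1..2*n}. level_ok a U k (b k)) \<and>
    (\<forall>k. odd k \<and> k < 2*n \<longrightarrow> phi_separation Psi a U k)"
  then obtain b where G: "\<forall>k\<in>{1..2*n}. growth a k" and L: "\<forall>k\<in>{1..2*n}. level_ok a U k (b k)"
    and P: "\<forall>k. odd k \<and> k < 2*n \<longrightarrow> phi_separation Psi a U k"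
    by blast
  have "growth a 1" using G assms by simp
  then have a1: "2 \<le> a 1" by (simp add: growth_def)
  have grow: "\<forall>k\<in>{2..2*n}. (k - 1) * (\<Prod>j\<in>{1..k-1}. a j) \<le> a k"
  proof
    fix k assume k: "k \<in> {2..2*n}"
    then have "growth a k" "k \<noteq> 1" using G by auto
    then show "(k - 1) * (\<Prod>j\<in>{1..k-1}. a j) \<le> a k" by (simp add: growth_def)
  qed
  show "balanced Psi n a U"
    unfolding balanced_def
  proof (intro disjI2 conjI exI[of _ b] a1 grow)
    show "\<forall>k\<in>{1..2*n}. 0 < a k" using G by (simp add: growth_def)
    show "\<forall>k\<in>{1..2*n}. \<forall>s\<in>Iset a k. open (U s) \<and> U s \<noteq> {}"
      "\<forall>k\<in>{1..2*n}. 0 < b k"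
      "\<forall>k\<in>{1..2*n}. \<forall>s\<in>Iset a k. bounded (U s) \<and> diameter (U s) \<le> b k"
      "\<forall>k\<in>{1..2*n}. \<forall>s\<in>Iset a k. \<forall>t\<in>Iset a k. s \<noteq> t \<longrightarrow> setdist (U s) (U t) > 2 * b k"
      using L by (simp_all add: level_ok_def)
    show "\<forall>k\<in>{2..2*n}. \<forall>s\<in>Iset a k. closure (U s) \<subseteq> U (butlast s)"
    proof (intro ballI)
      fix k s assume "k \<in> {2..2*n}" "s \<in> Iset a k"
      then show "closure (U s) \<subseteq> U (butlast s)" using L[rule_format, of k] by (simp add: level_ok_def)
    qed
    show "\<forall>k. odd k \<and> k < 2*n \<longrightarrow> (\<forall>s\<in>Iset a k. \<forall>t\<in>Iset a k.
              U s \<subseteq> U (Phi Psi a k) \<and> \<not> U t \<subseteq> U (Phi Psi a k) \<longrightarrow>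
              (\<forall>p\<in>{1..a (k+1)}. \<forall>q\<in>{1..a (k+1)}. p \<noteq> q \<longrightarrow>
                 setdist (U (s @ [p])) (U (s @ [q])) > diameter (\<Union>r\<in>{1..a (k+1)}. U (t @ [r]))))"
      using P by (simp add: phi_separation_def)
  qed
qed

lemma growth_cong:
  assumes eq: "\<And>j. j \<in> {1..k} \<Longrightarrow> a' j = a j" and "1 \<le> k"
  shows "growth a' k = growth a k"
proof -
  have "(\<Prod>j\<in>{1..k-1}. a' j) = (\<Prod>j\<in>{1..k-1}. a j)"
    by (rule prod.cong) (use eq in auto)
  moreover have "a' k = a k" "a' 1 = a 1" using eq assms(2) by auto
  ultimately show ?thesis unfolding growth_def by simp
qed

lemma level_ok_cong:
  assumes "\<And>j. j \<in> {1..k} \<Longrightarrow> a' j = a j" "\<And>s. s \<in> Iset a k \<Longrightarrow> U' s = U s"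
    and "\<And>s. 2 \<le> k \<Longrightarrow> s \<in> Iset a (k - 1) \<Longrightarrow> U' s = U s"
  shows "level_ok a' U' k \<beta> = level_ok a U k \<beta>"
proof -
  have Iset_eq: "Iset a' k = Iset a k" by (rule Iset_cong) (use assms(1) in auto)
  have U_parent: "U' (butlast s) = U (butlast s)" if "s \<in> Iset a k" "2 \<le> k" for s
    using that assms(3) butlast_Iset[of s a "k - 1"] by simp
  show ?thesis
    by (simp add: level_ok_def Iset_eq assms(2) U_parent)
qed

lemma phi_separation_cong:
  assumes "\<And>j. j \<in> {1..k+1} \<Longrightarrow> a' j = a j"
    and "\<And>j s. j \<in> {1..k+1} \<Longrightarrow> s \<in> Iset a j \<Longrightarrow> U' s = U s"
    and "1 \<le> k" "1 \<le> a 1"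
  shows "phi_separation Psi a' U' k = phi_separation Psi a U k"
proof -
  have Iset_eq: "Iset a' k = Iset a k" by (rule Iset_cong) (use assms(1) in auto)
  have Phi_eq: "Phi Psi a' k = Phi Psi a k" by (rule Phi_cong) (use assms(1) in auto)
  have U_Phi: "U' (Phi Psi a k) = U (Phi Psi a k)"
    using Phi_mem[of k a Psi] assms(2-4) by fastforce
  have U_s: "U' s = U s" if "s \<in> Iset a k" for s
    using assms(2)[of k s] assms(3) that by simp
  have U_child: "U' (s @ [p]) = U (s @ [p])" if "s \<in> Iset a k" "p \<in> {1..a (k+1)}" for s p
    using assms(2)[of "k+1"] that Iset_snoc[of s p a k] by simp
  have U_children: "(\<Union>r\<in>{1..a (k+1)}. U' (t @ [r])) = (\<Union>r\<in>{1..a (k+1)}. U (t @ [r]))"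
    if "t \<in> Iset a k" for t
    using U_child[OF that] by simp
  have a_eq: "a' (k+1) = a (k+1)" using assms(1) by simp
  show ?thesis
    unfolding phi_separation_def Iset_eq Phi_eq U_Phi a_eq
    by (simp add: U_s U_child U_children)
qed

lemma balanced_old_levels:
  assumes "balanced Psi n a U"
  obtains b where "\<And>k. k \<in> {1..2*n} \<Longrightarrow> growth a k \<and> level_ok a U k (b k) \<and>
      (odd k \<and> k < 2*n \<longrightarrow> phi_separation Psi a U k)"
proof (cases "n = 0")
  case False
  then obtain b where "\<forall>k\<in>{1..2*n}. level_ok a U k (b k)" "\<forall>k\<in>{1..2*n}. growth a k"
    "\<forall>k. odd k \<and> k < 2*n \<longrightarrow> phi_separation Psi a U k"
    using assms balanced_levels[of n Psi a U] by auto
  then show ?thesis using that by blast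
qed (use that in simp)

lemma balanced_extend:
  assumes bal: "balanced Psi n a U" and cons: "consistent n a U a' U'"
    and grow: "growth a' (2*n+1)" "growth a' (2*n+2)"
    and levels: "level_ok a' U' (2*n+1) \<beta>\<^sub>1" "level_ok a' U' (2*n+2) \<beta>\<^sub>2"
    and sep: "phi_separation Psi a' U' (2*n+1)"
  shows "balanced Psi (Suc n) a' U'"
proof -
  obtain b where old: "\<And>k. k \<in> {1..2*n} \<Longrightarrow> growth a k \<and> level_ok a U k (b k) \<and>
      (odd k \<and> k < 2*n \<longrightarrow> phi_separation Psi a U k)"
    using balanced_old_levels[OF bal] by blast
  have a_eq: "\<And>j. j \<in> {1..2*n} \<Longrightarrow> a' j = a j"
    and U_eq: "\<And>j s. j \<in> {1..2*n} \<Longrightarrow> s \<in> Iset a j \<Longrightarrow> U' s = U s"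
    using cons by (auto simp: consistent_def)
  have old': "growth a' k \<and> level_ok a' U' k (b k) \<and> (odd k \<and> k < 2*n \<longrightarrow> phi_separation Psi a' U' k)"
    if k: "k \<in> {1..2*n}" for k
  proof -
    have a1: "1 \<le> a 1" using old[of 1] k by (auto simp: growth_def)
    have "growth a' k = growth a k"
      by (rule growth_cong) (use a_eq k in auto)
    moreover have "level_ok a' U' k (b k) = level_ok a U k (b k)"
    proof (rule level_ok_cong)
      show "U' s = U s" if "2 \<le> k" "s \<in> Iset a (k - 1)" for s
        using U_eq[of "k - 1" s] that k by fastforce
    qed (use a_eq U_eq k in auto)
    moreover have "phi_separation Psi a' U' k = phi_separation Psi a U k" if "k < 2*n"
    proof (rule phi_separation_cong)
      show "U' s = U s" if "j \<in> {1..k+1}" "s \<in> Iset a j" for j s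
        using U_eq[of j s] that \<open>k < 2*n\<close> by simp
    qed (use a_eq k that a1 in auto)
    ultimately show ?thesis using old[OF k] by auto
  qed
  define b' where "b' k = (if k \<le> 2*n then b k else if k = 2*n+1 then \<beta>\<^sub>1 else \<beta>\<^sub>2)" for k
  have "growth a' k \<and> level_ok a' U' k (b' k) \<and> (odd k \<and> k < 2*Suc n \<longrightarrow> phi_separation Psi a' U' k)"
    if k: "k \<in> {1..2*Suc n}" for k
  proof -
    consider "k \<in> {1..2*n}" | "k = 2*n+1" | "k = 2*n+2" using k by (simp; arith)
    moreover have "odd k \<Longrightarrow> k \<le> 2*n \<Longrightarrow> k < 2*n" by presburger
    ultimately show ?thesis
      by cases (use old' grow levels sep in \<open>auto simp: b'_def\<close>)
  qed
  note new = this
  have "phi_separation Psi a' U' k" if "odd k" "k < 2*Suc n" for k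
    using new[of k] that odd_pos[of k] by simp
  then show ?thesis
    using new by (subst balanced_levels) (auto intro!: exI[of _ b'])
qed

text \<open>In a perfect metric space non-empty open sets are infinite, so finitely many of
  them have pairwise distinct representatives.\<close>
lemma infinite_open_perfect:
  fixes G :: "'a::{metric_space,perfect_space} set"
  assumes "open G" "G \<noteq> {}"
  shows "infinite G"
proof -
  obtain x \<epsilon> where "0 < \<epsilon>" "ball x \<epsilon> \<subseteq> G"
    using assms open_contains_ball by blast
  moreover have "infinite (UNIV \<inter> ball x \<epsilon>)"
    using islimpt_UNIV[of x] \<open>0 < \<epsilon>\<close> unfolding islimpt_eq_infinite_ball by blast
  ultimately show ?thesis
    using finite_subset by auto
qed

lemma distinct_representatives:
  assumes "finite N" "\<And>u. u \<in> N \<Longrightarrow> infinite (G u)"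
  shows "\<exists>c. inj_on c N \<and> (\<forall>u\<in>N. c u \<in> G u)"
  using assms
proof (induction N rule: finite_induct)
  case (insert u N)
  then obtain c where c: "inj_on c N" "\<forall>v\<in>N. c v \<in> G v" by auto
  have "infinite (G u - c ` N)"
    using insert by (simp add: Diff_infinite_finite)
  then obtain y where "y \<in> G u" "y \<notin> c ` N"
    by (metis Diff_iff finite.emptyI ex_in_conv)
  then show ?case
    using c insert(2) by (intro exI[of _ "c(u := y)"]) (auto simp: inj_on_def)
qed simp

lemma uniform_ball_radius:
  fixes p :: "'i \<Rightarrow> 'a::metric_space"
  assumes "finite N" "\<And>u. u \<in> N \<Longrightarrow> open (G u) \<and> p u \<in> G u"
  shows "\<exists>\<epsilon>>0. \<forall>u\<in>N. ball (p u) \<epsilon> \<subseteq> G u"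
  using assms
proof (induction N rule: finite_induct)
  case (insert u N)
  then obtain \<epsilon> where \<epsilon>: "0 < \<epsilon>" "\<forall>v\<in>N. ball (p v) \<epsilon> \<subseteq> G v" by auto
  obtain \<delta> where \<delta>: "0 < \<delta>" "ball (p u) \<delta> \<subseteq> G u"
    using insert.prems[of u] open_contains_ball by blast
  show ?case
    using \<epsilon> \<delta> by (intro exI[of _ "min \<epsilon> \<delta>"]) force
qed (auto intro: exI[of _ 1])

lemma finite_separation:
  fixes P :: "'a::metric_space set"
  assumes "finite P"
  shows "\<exists>m>0. \<forall>x\<in>P. \<forall>y\<in>P. x \<noteq> y \<longrightarrow> m < dist x y"
  using assms
proof (induction P rule: finite_induct)
  case (insert x P)
  then obtain m where m: "0 < m" "\<forall>y\<in>P. \<forall>z\<in>P. y \<noteq> z \<longrightarrow> m < dist y z" by auto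
  obtain \<delta> where \<delta>: "0 < \<delta>" "\<forall>y\<in>P. y \<noteq> x \<longrightarrow> \<delta> \<le> dist x y"
    using finite_set_avoid[OF insert(1)] by blast
  have "min m (\<delta>/2) < dist y z" if "y \<in> insert x P" "z \<in> insert x P" "y \<noteq> z" for y z
  proof (cases "y = x \<or> z = x")
    case True
    then have "\<delta> \<le> dist y z" using \<delta>(2) that by (auto simp: dist_commute)
    then show ?thesis using \<delta>(1) by linarith
  next
    case False
    then show ?thesis using m(2) that by force
  qed
  then show ?case
    using m(1) \<delta>(1) by (intro exI[of _ "min m (\<delta>/2)"]) auto
qed (auto intro: exI[of _ 1])

lemma separated_centers:
  fixes G :: "'i \<Rightarrow> 'a::{metric_space,perfect_space} set"
  assumes "finite N" "\<And>u. u \<in> N \<Longrightarrow> open (G u) \<and> G u \<noteq> {}"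
  shows "\<exists>c \<rho>. 0 < \<rho> \<and> (\<forall>u\<in>N. ball (c u) \<rho> \<subseteq> G u) \<and>
           (\<forall>u\<in>N. \<forall>v\<in>N. u \<noteq> v \<longrightarrow> \<rho> < dist (c u) (c v))"
proof -
  obtain c where inj: "inj_on c N" and c: "\<forall>u\<in>N. c u \<in> G u"
    using distinct_representatives[OF assms(1)] assms(2) infinite_open_perfect by metis
  obtain \<epsilon> where \<epsilon>: "0 < \<epsilon>" "\<forall>u\<in>N. ball (c u) \<epsilon> \<subseteq> G u"
    using uniform_ball_radius[OF assms(1), of G c] assms(2) c by blast
  obtain m where m: "0 < m" "\<forall>x\<in>c ` N. \<forall>y\<in>c ` N. x \<noteq> y \<longrightarrow> m < dist x y"
    using finite_separation[of "c ` N"] assms(1) by blast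
  have "\<forall>u\<in>N. \<forall>v\<in>N. u \<noteq> v \<longrightarrow> m < dist (c u) (c v)"
    using m(2) inj by (auto simp: inj_on_def)
  then show ?thesis
    using \<epsilon> m(1) by (intro exI[of _ c] exI[of _ "min \<epsilon> m"]) force
qed

lemma setdist_balls:
  fixes x y :: "'a::metric_space"
  assumes "0 < r"
  shows "dist x y - 2*r \<le> setdist (ball x r) (ball y r)"
proof (rule le_setdistI)
  fix x' y' assume "x' \<in> ball x r" "y' \<in> ball y r"
  then show "dist x y - 2*r \<le> dist x' y'"
    using dist_triangle[of x y x'] dist_triangle[of x' y y'] by (auto simp: dist_commute)
qed (use assms in auto)

lemma diameter_in_ball:
  fixes x :: "'a::metric_space"
  assumes "S \<subseteq> ball x r" "0 \<le> r"
  shows "bounded S \<and> diameter S \<le> 2*r"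
proof
  show "bounded S" using assms bounded_ball bounded_subset by blast
  show "diameter S \<le> 2*r"
  proof (cases "S = {}")
    case False
    have "dist y z \<le> 2*r" if "y \<in> S" "z \<in> S" for y z
    proof -
      have "dist x y < r" "dist x z < r" using assms that by auto
      then show ?thesis using dist_triangle[of y z x] by (simp add: dist_commute)
    qed
    then show ?thesis using False unfolding diameter_def by (auto intro!: cSUP_least)
  qed (use assms in \<open>auto simp: ball_empty\<close>)
qed

lemma ball_level_ok:
  fixes ctr :: "nat list \<Rightarrow> 'a::metric_space"
  assumes "0 < \<rho>" and U: "\<And>s. s \<in> Iset a k \<Longrightarrow> U s = ball (ctr s) \<rho>"
    and nest: "\<And>s. 2 \<le> k \<Longrightarrow> s \<in> Iset a k \<Longrightarrow> cball (ctr s) \<rho> \<subseteq> U (butlast s)"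
    and sep: "\<And>s t. s \<in> Iset a k \<Longrightarrow> t \<in> Iset a k \<Longrightarrow> s \<noteq> t \<Longrightarrow> 6*\<rho> < dist (ctr s) (ctr t)"
  shows "level_ok a U k (2*\<rho>)"
  unfolding level_ok_def
proof (intro conjI ballI impI)
  fix s assume s: "s \<in> Iset a k"
  show "open (U s)" "U s \<noteq> {}" using U[OF s] \<open>0 < \<rho>\<close> by auto
  show "bounded (U s)" "diameter (U s) \<le> 2*\<rho>"
    using U[OF s] diameter_in_ball[of "U s" "ctr s" \<rho>] \<open>0 < \<rho>\<close> by auto
  show "closure (U s) \<subseteq> U (butlast s)" if "2 \<le> k"
    using U[OF s] nest[OF that s] closure_minimal[OF ball_subset_cball closed_cball]
    by (metis subset_trans)
next
  fix s t assume "s \<in> Iset a k" "t \<in> Iset a k" "s \<noteq> t"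
  then show "2 * (2*\<rho>) < setdist (U s) (U t)"
    using U sep[of s t] setdist_balls[OF \<open>0 < \<rho>\<close>, of "ctr s" "ctr t"] by simp
qed (use assms in simp)

lemma distant_children:
  fixes p q x y :: "'a::metric_space"
  assumes "6*R < dist p q" "dist p x < R/2" "dist q y < R/2" "r \<le> R/4"
  shows "6*r < dist x y"
proof -
  have "dist p q \<le> dist p x + dist x y + dist q y"
    using dist_triangle[of p q x] dist_triangle[of x q y] by (simp add: dist_commute)
  moreover have "0 < R" using assms(2) zero_le_dist[of p x] by linarith
  ultimately show ?thesis using assms by linarith
qed

lemma cluster_smaller_than_gap:
  fixes x y z :: "'a::metric_space"
  assumes "m < dist x y" "\<And>i. i \<in> I \<Longrightarrow> dist z (w i) < \<rho>" "0 \<le> \<rho>" "0 < r" "\<rho> \<le> m/8" "r \<le> m/8"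
  shows "diameter (\<Union>i\<in>I. ball (w i) r) < setdist (ball x r) (ball y r)"
proof -
  have "(\<Union>i\<in>I. ball (w i) r) \<subseteq> ball z (\<rho> + r)"
  proof (intro UN_least subsetI)
    fix i v assume "i \<in> I" "v \<in> ball (w i) r"
    then have "dist z (w i) < \<rho>" "dist (w i) v < r" using assms(2) by auto
    then show "v \<in> ball z (\<rho> + r)" using dist_triangle[of z v "w i"] by simp
  qed
  then have "diameter (\<Union>i\<in>I. ball (w i) r) \<le> 2*(\<rho> + r)"
    using diameter_in_ball assms(3,4) by (metis add_nonneg_nonneg less_imp_le)
  moreover have "2*(\<rho> + r) < dist x y - 2*r"
    unfolding distrib_left using assms(1,4-6) by linarith
  ultimately show ?thesis
    using setdist_balls[OF assms(4), of x y] by linarith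
qed

text \<open>This is how condition (5) is met at the new odd level.\<close>
lemma cluster_centers:
  fixes c :: "'i \<Rightarrow> 'a::{metric_space,perfect_space}" and B :: nat
  assumes "finite N" "0 < R"
    and sep_c: "\<And>u v. u \<in> N \<Longrightarrow> v \<in> N \<Longrightarrow> u \<noteq> v \<Longrightarrow> 6*R < dist (c u) (c v)"
  shows "\<exists>d r. 0 < r \<and> r \<le> R/4 \<and> (\<forall>u\<in>N. \<forall>i\<in>{1..B}. dist (c u) (d u i) < R/2) \<and>
     (\<forall>u\<in>N. \<forall>v\<in>N. \<forall>i\<in>{1..B}. \<forall>j\<in>{1..B}. (u, i) \<noteq> (v, j) \<longrightarrow> 6*r < dist (d u i) (d v j)) \<and>
     (\<forall>s\<in>N \<inter> S. \<forall>t\<in>N - S. \<forall>p\<in>{1..B}. \<forall>q\<in>{1..B}. p \<noteq> q \<longrightarrow>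
        diameter (\<Union>i\<in>{1..B}. ball (d t i) r) < setdist (ball (d s p) r) (ball (d s q) r))"
proof -
  have fin: "finite ((N \<inter> S) \<times> {1..B})" "finite ((N - S) \<times> {1..B})"
    using assms(1) by simp_all
  obtain d\<^sub>1 m where m: "0 < m" and d\<^sub>1: "\<forall>x\<in>(N \<inter> S) \<times> {1..B}. ball (d\<^sub>1 x) m \<subseteq> ball (c (fst x)) (R/2)"
    and sep\<^sub>1: "\<forall>x\<in>(N \<inter> S) \<times> {1..B}. \<forall>y\<in>(N \<inter> S) \<times> {1..B}. x \<noteq> y \<longrightarrow> m < dist (d\<^sub>1 x) (d\<^sub>1 y)"
    using separated_centers[OF fin(1), of "\<lambda>x. ball (c (fst x)) (R/2)"] assms(2) by auto
  define \<rho> where "\<rho> = min (R/2) (m/8)"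
  have "0 < \<rho>" using m assms(2) by (simp add: \<rho>_def)
  obtain d\<^sub>2 m\<^sub>2 where m\<^sub>2: "0 < m\<^sub>2" and d\<^sub>2: "\<forall>x\<in>(N - S) \<times> {1..B}. ball (d\<^sub>2 x) m\<^sub>2 \<subseteq> ball (c (fst x)) \<rho>"
    and sep\<^sub>2: "\<forall>x\<in>(N - S) \<times> {1..B}. \<forall>y\<in>(N - S) \<times> {1..B}. x \<noteq> y \<longrightarrow> m\<^sub>2 < dist (d\<^sub>2 x) (d\<^sub>2 y)"
    using separated_centers[OF fin(2), of "\<lambda>x. ball (c (fst x)) \<rho>"] \<open>0 < \<rho>\<close> by auto
  define d where "d u i = (if u \<in> S then d\<^sub>1 (u, i) else d\<^sub>2 (u, i))" for u i
  define r where "r = min (min (m/8) (m\<^sub>2/6)) (R/4)"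
  have r: "0 < r" "r \<le> R/4" "r \<le> m/8" "6*r \<le> m\<^sub>2"
    using m m\<^sub>2 assms(2) by (auto simp: r_def)
  have near_S: "dist (c u) (d u i) < R/2" if "u \<in> N \<inter> S" "i \<in> {1..B}" for u i
  proof -
    have "ball (d\<^sub>1 (u, i)) m \<subseteq> ball (c u) (R/2)" using d\<^sub>1 that by auto
    then have "d\<^sub>1 (u, i) \<in> ball (c u) (R/2)" using centre_in_ball m by blast
    then show ?thesis using that by (simp add: d_def)
  qed
  have near_T: "dist (c u) (d u i) < \<rho>" if "u \<in> N - S" "i \<in> {1..B}" for u i
  proof -
    have "ball (d\<^sub>2 (u, i)) m\<^sub>2 \<subseteq> ball (c u) \<rho>" using d\<^sub>2 that by auto
    then have "d\<^sub>2 (u, i) \<in> ball (c u) \<rho>" using centre_in_ball m\<^sub>2 by blast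
    then show ?thesis using that by (simp add: d_def)
  qed
  have \<rho>_le: "\<rho> \<le> R/2" "\<rho> \<le> m/8" by (simp_all add: \<rho>_def)
  have near: "dist (c u) (d u i) < R/2" if "u \<in> N" "i \<in> {1..B}" for u i
    using near_S[of u i] near_T[of u i] \<rho>_le that by (cases "u \<in> S") auto
  have sep: "6*r < dist (d u i) (d v j)"
    if "u \<in> N" "v \<in> N" "i \<in> {1..B}" "j \<in> {1..B}" "(u, i) \<noteq> (v, j)" for u v i j
  proof (cases "u = v")
    case True
    show ?thesis
    proof (cases "u \<in> S")
      case True
      then have "m < dist (d\<^sub>1 (u, i)) (d\<^sub>1 (v, j))" using sep\<^sub>1 that \<open>u = v\<close> by auto
      then show ?thesis using True \<open>u = v\<close> r(3) m by (simp add: d_def)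
    next
      case False
      then have "m\<^sub>2 < dist (d\<^sub>2 (u, i)) (d\<^sub>2 (v, j))" using sep\<^sub>2 that \<open>u = v\<close> by auto
      then show ?thesis using False \<open>u = v\<close> r(4) by (simp add: d_def)
    qed
  next
    case False
    show ?thesis
      by (rule distant_children[OF sep_c[OF that(1,2) False] near[OF that(1,3)] near[OF that(2,4)] r(2)])
  qed
  have cluster: "diameter (\<Union>i\<in>{1..B}. ball (d t i) r) < setdist (ball (d s p) r) (ball (d s q) r)"
    if "s \<in> N \<inter> S" "t \<in> N - S" "p \<in> {1..B}" "q \<in> {1..B}" "p \<noteq> q" for s t p q
  proof (rule cluster_smaller_than_gap[where \<rho>=\<rho> and m=m])
    show "m < dist (d s p) (d s q)" using sep\<^sub>1 that by (auto simp: d_def)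
  qed (use near_T that \<open>0 < \<rho>\<close> r \<rho>_le in auto)
  show ?thesis
    using r(1,2) near sep cluster by (intro exI[of _ d] exI[of _ r]) blast
qed

definition extend_level :: "nat \<Rightarrow> (nat list \<Rightarrow> 'a set) \<Rightarrow> (nat list \<Rightarrow> 'a set) \<Rightarrow> nat list \<Rightarrow> 'a set" where
  "extend_level m U V s = (if length s \<le> m then U s else V s)"

lemma extend_level_low: "length s \<le> m \<Longrightarrow> extend_level m U V s = U s"
  and extend_level_high: "m < length s \<Longrightarrow> extend_level m U V s = V s"
  by (simp_all add: extend_level_def)

lemma new_ball_levels:
  fixes U :: "nat list \<Rightarrow> 'a::metric_space set" and c :: "nat list \<Rightarrow> 'a"
    and d :: "nat list \<Rightarrow> nat \<Rightarrow> 'a" and m :: nat and R r :: real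
  defines "U' \<equiv> extend_level (m+1) (extend_level m U (\<lambda>s. ball (c s) R)) (\<lambda>v. ball (d (butlast v) (last v)) r)"
  assumes "0 < R" "0 < r" "r \<le> R/4"
    and sep: "\<And>u v. u \<in> Iset a (m+1) \<Longrightarrow> v \<in> Iset a (m+1) \<Longrightarrow> u \<noteq> v \<Longrightarrow> 6*R < dist (c u) (c v)"
    and nest: "\<And>u. 0 < m \<Longrightarrow> u \<in> Iset a (m+1) \<Longrightarrow> cball (c u) R \<subseteq> U (butlast u)"
    and near: "\<forall>u\<in>Iset a (m+1). \<forall>i\<in>{1..a (m+2)}. dist (c u) (d u i) < R/2"
    and sep_d: "\<forall>u\<in>Iset a (m+1). \<forall>v\<in>Iset a (m+1). \<forall>i\<in>{1..a (m+2)}. \<forall>j\<in>{1..a (m+2)}.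
                 (u, i) \<noteq> (v, j) \<longrightarrow> 6*r < dist (d u i) (d v j)"
  shows "level_ok a U' (m+1) (2*R)" "level_ok a U' (m+2) (2*r)"
    and "\<And>v. v \<in> Iset a (m+2) \<Longrightarrow> U' v \<subseteq> ball (c (butlast v)) R"
proof -
  have U'_odd: "U' u = ball (c u) R" if "u \<in> Iset a (m+1)" for u
    using that Iset_length by (fastforce simp: U'_def extend_level_def)
  have U'_even: "U' (u @ [i]) = ball (d u i) r" if "u \<in> Iset a (m+1)" for u i
    using that Iset_length by (fastforce simp: U'_def extend_level_def)
  have children: "v \<in> Iset a (m+2) \<longleftrightarrow> (\<exists>u\<in>Iset a (m+1). \<exists>i\<in>{1..a (m+2)}. v = u @ [i])" for v
    using Iset_Suc_iff[of v a "m+1"] by simp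
  have child_in_parent: "cball (d u i) r \<subseteq> ball (c u) R" if "u \<in> Iset a (m+1)" "i \<in> {1..a (m+2)}" for u i
  proof
    fix y assume "y \<in> cball (d u i) r"
    then have "dist (d u i) y \<le> r" by simp
    moreover have "dist (c u) (d u i) < R/2" using near that by blast
    ultimately have "dist (c u) y < R"
      using \<open>0 < R\<close> \<open>r \<le> R/4\<close> dist_triangle[of "c u" y "d u i"] by linarith
    then show "y \<in> ball (c u) R" by simp
  qed
  show "level_ok a U' (m+1) (2*R)"
  proof (rule ball_level_ok[OF \<open>0 < R\<close>])
    fix u assume "2 \<le> m+1" "u \<in> Iset a (m+1)"
    then show "cball (c u) R \<subseteq> U' (butlast u)"
      using nest Iset_length by (simp add: U'_def extend_level_low length_butlast)
  qed (use sep U'_odd in auto)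
  show "level_ok a U' (m+2) (2*r)"
  proof (rule ball_level_ok[OF \<open>0 < r\<close>, where ctr="\<lambda>v. d (butlast v) (last v)"])
    fix v assume "v \<in> Iset a (m+2)"
    then obtain u i where v: "v = u @ [i]" "u \<in> Iset a (m+1)" "i \<in> {1..a (m+2)}"
      using children by blast
    show "U' v = ball (d (butlast v) (last v)) r" using U'_even v by simp
    show "cball (d (butlast v) (last v)) r \<subseteq> U' (butlast v)"
      using child_in_parent[OF v(2,3)] U'_odd v by simp
  next
    fix v w assume v: "v \<in> Iset a (m+2)" and w: "w \<in> Iset a (m+2)" and "v \<noteq> w"
    moreover obtain u i where "v = u @ [i]" "u \<in> Iset a (m+1)" "i \<in> {1..a (m+2)}"
      using children v by blast
    moreover obtain u' j where "w = u' @ [j]" "u' \<in> Iset a (m+1)" "j \<in> {1..a (m+2)}"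
      using children w by blast
    ultimately show "6*r < dist (d (butlast v) (last v)) (d (butlast w) (last w))"
      using sep_d by auto
  qed
  show "U' v \<subseteq> ball (c (butlast v)) R" if v: "v \<in> Iset a (m+2)" for v
  proof -
    obtain u i where ui: "v = u @ [i]" "u \<in> Iset a (m+1)" "i \<in> {1..a (m+2)}"
      using children v by blast
    have "U' v \<subseteq> cball (d u i) r" using U'_even ui ball_subset_cball by simp
    also have "\<dots> \<subseteq> ball (c u) R" using child_in_parent ui by blast
    finally show ?thesis using ui by simp
  qed
qed

lemma new_phi_separation:
  fixes U :: "nat list \<Rightarrow> 'a::metric_space set" and c :: "nat list \<Rightarrow> 'a"
    and d :: "nat list \<Rightarrow> nat \<Rightarrow> 'a" and m :: nat and R r :: real
    and Psi :: "nat \<Rightarrow> nat list" and a :: "nat \<Rightarrow> nat"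
  defines "U\<^sub>1 \<equiv> extend_level m U (\<lambda>s. ball (c s) R)"
  defines "U' \<equiv> extend_level (m+1) U\<^sub>1 (\<lambda>v. ball (d (butlast v) (last v)) r)"
  defines "S \<equiv> {u. U\<^sub>1 u \<subseteq> U\<^sub>1 (Phi Psi a (m+1))}"
  assumes cluster: "\<forall>s\<in>Iset a (m+1) \<inter> S. \<forall>t\<in>Iset a (m+1) - S. \<forall>p\<in>{1..a (m+2)}. \<forall>q\<in>{1..a (m+2)}.
      p \<noteq> q \<longrightarrow> diameter (\<Union>i\<in>{1..a (m+2)}. ball (d t i) r) < setdist (ball (d s p) r) (ball (d s q) r)"
  shows "phi_separation Psi a U' (m+1)"
  unfolding phi_separation_def
proof (intro ballI impI)
  fix s t p q assume st: "s \<in> Iset a (m+1)" "t \<in> Iset a (m+1)"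
    and Phi: "U' s \<subseteq> U' (Phi Psi a (m+1)) \<and> \<not> U' t \<subseteq> U' (Phi Psi a (m+1))"
    and pq: "p \<in> {1..a (m+1+1)}" "q \<in> {1..a (m+1+1)}" "p \<noteq> q"
  have "U' u = U\<^sub>1 u" if "length u \<le> m+1" for u
    using that by (simp add: U'_def extend_level_low)
  then have "s \<in> S" "t \<notin> S"
    using Phi Phi_length[of "m+1" Psi a] st Iset_length by (auto simp: S_def)
  moreover have "U' (u @ [i]) = ball (d u i) r" if "u \<in> Iset a (m+1)" for u i
    using that Iset_length by (simp add: U'_def extend_level_high)
  ultimately show "diameter (\<Union>i\<in>{1..a (m+1+1)}. U' (t @ [i])) < setdist (U' (s @ [p])) (U' (s @ [q]))"
    using cluster st pq by simp
qed

lemma balanced_extension_from_centers: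
  fixes U :: "nat list \<Rightarrow> 'a::{metric_space,perfect_space} set" and c :: "nat list \<Rightarrow> 'a"
  assumes bal: "balanced Psi n a U"
    and a': "\<And>j. j \<le> 2*n \<Longrightarrow> a' j = a j" "growth a' (2*n+1)" "growth a' (2*n+2)"
    and "0 < R"
    and sep: "\<And>u v. u \<in> Iset a' (2*n+1) \<Longrightarrow> v \<in> Iset a' (2*n+1) \<Longrightarrow> u \<noteq> v \<Longrightarrow> 6*R < dist (c u) (c v)"
    and nest: "\<And>u. 0 < n \<Longrightarrow> u \<in> Iset a' (2*n+1) \<Longrightarrow> cball (c u) R \<subseteq> U (butlast u)"
  shows "\<exists>U'. balanced Psi (Suc n) a' U' \<and> consistent n a U a' U' \<and>
           (\<forall>v\<in>Iset a' (2*n+2). U' v \<subseteq> ball (c (butlast v)) R)"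
proof -
  define U\<^sub>1 where "U\<^sub>1 = extend_level (2*n) U (\<lambda>s. ball (c s) R)"
  define S where "S = {u. U\<^sub>1 u \<subseteq> U\<^sub>1 (Phi Psi a' (2*n+1))}"
  obtain d r where r: "0 < r" "r \<le> R/4"
    and near: "\<forall>u\<in>Iset a' (2*n+1). \<forall>i\<in>{1..a' (2*n+2)}. dist (c u) (d u i) < R/2"
    and sep_d: "\<forall>u\<in>Iset a' (2*n+1). \<forall>v\<in>Iset a' (2*n+1). \<forall>i\<in>{1..a' (2*n+2)}. \<forall>j\<in>{1..a' (2*n+2)}.
                 (u, i) \<noteq> (v, j) \<longrightarrow> 6*r < dist (d u i) (d v j)"
    and cluster: "\<forall>s\<in>Iset a' (2*n+1) \<inter> S. \<forall>t\<in>Iset a' (2*n+1) - S. \<forall>p\<in>{1..a' (2*n+2)}. \<forall>q\<in>{1..a' (2*n+2)}.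
        p \<noteq> q \<longrightarrow> diameter (\<Union>i\<in>{1..a' (2*n+2)}. ball (d t i) r) < setdist (ball (d s p) r) (ball (d s q) r)"
    using cluster_centers[where N="Iset a' (2*n+1)" and c=c and B="a' (2*n+2)" and S=S, OF finite_Iset \<open>0 < R\<close> sep]
    by blast
  define U' where "U' = extend_level (2*n+1) U\<^sub>1 (\<lambda>v. ball (d (butlast v) (last v)) r)"
  have levels: "level_ok a' U' (2*n+1) (2*R)" "level_ok a' U' (2*n+2) (2*r)"
    and inside: "\<And>v. v \<in> Iset a' (2*n+2) \<Longrightarrow> U' v \<subseteq> ball (c (butlast v)) R"
    using new_ball_levels[OF \<open>0 < R\<close> r sep nest near sep_d] unfolding U'_def U\<^sub>1_def by auto
  have phi: "phi_separation Psi a' U' (2*n+1)"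
    using new_phi_separation[OF cluster[unfolded S_def U\<^sub>1_def]] unfolding U'_def U\<^sub>1_def .
  have cons: "consistent n a U a' U'"
    using a'(1) Iset_length by (auto simp: consistent_def U'_def U\<^sub>1_def extend_level_low)
  show ?thesis
    using balanced_extend[OF bal cons a'(2,3) levels phi] cons inside by blast
qed

lemma surjective_assignment:
  assumes "finite F" "\<And>z. z \<in> F \<Longrightarrow> \<exists>j\<in>J. z \<in> W j" "\<And>j. j \<in> J \<Longrightarrow> W j \<inter> F \<noteq> {}"
    and "card F \<le> A"
  shows "\<exists>x. (\<forall>j\<in>J. \<forall>i\<in>{1..A}. x j i \<in> W j \<inter> F) \<and> F \<subseteq> (\<Union>j\<in>J. x j ` {1..A})"
proof -
  have "\<exists>ys. set ys = W j \<inter> F \<and> distinct ys" for j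
    using finite_distinct_list[of "W j \<inter> F"] assms(1) by simp
  then obtain xs where xs: "\<And>j. set (xs j) = W j \<inter> F \<and> distinct (xs j)"
    by metis
  have len: "length (xs j) \<le> A" for j
    using distinct_card[of "xs j"] xs[of j] card_mono[OF assms(1), of "W j \<inter> F"] assms(4) by auto
  define x where "x j i = xs j ! min (i - 1) (length (xs j) - 1)" for j i
  have "x j i \<in> W j \<inter> F" if "j \<in> J" for j i
  proof -
    have "xs j \<noteq> []" using assms(3)[OF that] xs[of j] by auto
    then have "min (i - 1) (length (xs j) - 1) < length (xs j)" by (cases "xs j") auto
    then have "xs j ! min (i - 1) (length (xs j) - 1) \<in> set (xs j)" by (rule nth_mem)
    then show ?thesis using xs[of j] by (simp add: x_def)
  qed
  moreover have "z \<in> (\<Union>j\<in>J. x j ` {1..A})" if z: "z \<in> F" for z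
  proof -
    obtain j where "j \<in> J" "z \<in> W j" using assms(2)[OF z] by blast
    then have j: "j \<in> J" "z \<in> set (xs j)" using xs[of j] z by auto
    then obtain k where k: "k < length (xs j)" "xs j ! k = z" by (metis in_set_conv_nth)
    then have "x j (k + 1) = z" by (simp add: x_def)
    moreover have "k + 1 \<in> {1..A}" using k(1) len[of j] by simp
    ultimately have "z \<in> x j ` {1..A}" by (metis imageI)
    then show ?thesis using j(1) by blast
  qed
  ultimately show ?thesis by (intro exI[of _ x]) auto
qed

lemma cell_targets:
  fixes K :: "'a::metric_space set"
  assumes "compact K" "finite J" "K \<subseteq> (\<Union>j\<in>J. W j)" "\<And>j. j \<in> J \<Longrightarrow> K \<inter> W j \<noteq> {}" "0 < \<delta>"
  shows "\<exists>A\<^sub>0::nat. \<forall>A\<ge>A\<^sub>0. \<exists>x. (\<forall>j\<in>J. \<forall>i\<in>{1..A}. x j i \<in> K \<inter> W j) \<and>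
           K \<subseteq> (\<Union>j\<in>J. \<Union>i\<in>{1..A}. ball (x j i) \<delta>)"
proof -
  obtain F\<^sub>0 where F\<^sub>0: "F\<^sub>0 \<subseteq> K" "finite F\<^sub>0" "K \<subseteq> (\<Union>z\<in>F\<^sub>0. ball z \<delta>)"
    using compactE_image[OF assms(1), of K "\<lambda>z. ball z \<delta>"] assms(5) by force
  obtain p where p: "\<And>j. j \<in> J \<Longrightarrow> p j \<in> K \<inter> W j"
    using bchoice[of J "\<lambda>j z. z \<in> K \<inter> W j"] assms(4) by blast
  define F where "F = F\<^sub>0 \<union> p ` J"
  have F: "finite F" "F \<subseteq> K" using F\<^sub>0 p assms(2) by (auto simp: F_def)
  have targets: "\<exists>x. (\<forall>j\<in>J. \<forall>i\<in>{1..A}. x j i \<in> K \<inter> W j) \<and> K \<subseteq> (\<Union>j\<in>J. \<Union>i\<in>{1..A}. ball (x j i) \<delta>)"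
    if A: "card F \<le> A" for A
  proof -
    obtain x where x: "\<forall>j\<in>J. \<forall>i\<in>{1..A}. x j i \<in> W j \<inter> F" and onto: "F \<subseteq> (\<Union>j\<in>J. x j ` {1..A})"
      using surjective_assignment[OF F(1) _ _ A, of J W] F(2) assms(3) p by (force simp: F_def)
    have "K \<subseteq> (\<Union>z\<in>F. ball z \<delta>)" using F\<^sub>0(3) by (auto simp: F_def)
    also have "\<dots> \<subseteq> (\<Union>j\<in>J. \<Union>i\<in>{1..A}. ball (x j i) \<delta>)" using onto by blast
    finally show ?thesis using x F(2) by blast
  qed
  show ?thesis
  proof (intro exI[of _ "card F"] allI impI)
    fix A assume "card F \<le> A"
    from targets[OF this] show "\<exists>x. (\<forall>j\<in>J. \<forall>i\<in>{1..A}. x j i \<in> K \<inter> W j) \<and>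
      K \<subseteq> (\<Union>j\<in>J. \<Union>i\<in>{1..A}. ball (x j i) \<delta>)" .
  qed
qed

lemma extend_sizes:
  fixes a :: "nat \<Rightarrow> nat"
  shows "\<exists>a'. (\<forall>j\<le>m. a' j = a j) \<and> C \<le> a' (m+1) \<and> growth a' (m+1) \<and> growth a' (m+2)"
proof -
  define P where "P = (\<Prod>j\<in>{1..m}. a j)"
  define A where "A = m * P + C + 2"
  define B where "B = (m + 1) * (P * A) + 1"
  define a' where "a' = a(m+1 := A, m+2 := B)"
  have "(\<Prod>j\<in>{1..m}. a' j) = P" unfolding P_def by (rule prod.cong) (auto simp: a'_def)
  then have "(\<Prod>j\<in>{1..m+1}. a' j) = P * A" by (simp add: a'_def)
  then have "growth a' (m+1)" "growth a' (m+2)"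
    using \<open>(\<Prod>j\<in>{1..m}. a' j) = P\<close> by (auto simp: growth_def a'_def A_def B_def)
  then show ?thesis by (intro exI[of _ a']) (auto simp: a'_def A_def)
qed

lemma hausdorff_dist_le:
  fixes K L :: "'a::metric_space set"
  assumes "K \<noteq> {}" "L \<noteq> {}"
    and "\<And>y. y \<in> L \<Longrightarrow> \<exists>x\<in>K. dist y x \<le> \<delta>" "\<And>x. x \<in> K \<Longrightarrow> \<exists>y\<in>L. dist x y \<le> \<delta>"
  shows "hausdorff_dist K L \<le> \<delta>"
proof -
  have "infdist y K \<le> \<delta>" if "y \<in> L" for y
    using assms(3)[OF that] infdist_le order_trans by blast
  moreover have "infdist x L \<le> \<delta>" if "x \<in> K" for x
    using assms(4)[OF that] infdist_le order_trans by blast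
  ultimately show ?thesis
    using assms(1,2) unfolding hausdorff_dist_def by (auto intro!: cSUP_least)
qed

lemma Uscheme_Kspace: "Uscheme n a U \<subseteq> Kspace"
  by (auto simp: Uscheme_def)

text \<open>The cells of the last level of a balanced scheme, seen from a compact set of
  \<open>\<U>(\<pi>)\<close>; for the empty scheme the whole space serves as the single cell.\<close>
lemma scheme_cells:
  assumes bal: "balanced Psi n a U" and K: "K \<in> Uscheme n a U"
  shows "\<exists>W. (\<forall>s\<in>Iset a (2*n). open (W s) \<and> K \<inter> W s \<noteq> {} \<and> (0 < n \<longrightarrow> W s = U s)) \<and>
             K \<subseteq> (\<Union>s\<in>Iset a (2*n). W s)"
proof (cases "n = 0")
  case True
  then have "K \<noteq> {}" using K by (simp add: Uscheme_def Kspace_def)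
  then show ?thesis using True by (intro exI[of _ "\<lambda>_. UNIV"]) (simp add: Iset_0)
next
  case False
  obtain b where "\<And>k. k \<in> {1..2*n} \<Longrightarrow> growth a k \<and> level_ok a U k (b k) \<and>
      (odd k \<and> k < 2*n \<longrightarrow> phi_separation Psi a U k)"
    using balanced_old_levels[OF bal] by blast
  then have "level_ok a U (2*n) (b (2*n))" using False by simp
  then show ?thesis
    using K False by (intro exI[of _ U]) (auto simp: Uscheme_def level_ok_def)
qed

lemma Uscheme_close:
  fixes K :: "'a::metric_space set"
  assumes "0 < m" "K \<noteq> {}" "L \<in> Uscheme m a U"
    and near: "\<And>v. v \<in> Iset a (2*m) \<Longrightarrow> U v \<subseteq> ball (p v) \<delta> \<and> p v \<in> K"
    and net: "K \<subseteq> (\<Union>v\<in>Iset a (2*m). ball (p v) \<delta>)"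
  shows "hausdorff_dist K L \<le> 2*\<delta>"
proof (rule hausdorff_dist_le)
  have L: "L \<noteq> {}" "L \<subseteq> (\<Union>v\<in>Iset a (2*m). U v)" "\<And>v. v \<in> Iset a (2*m) \<Longrightarrow> L \<inter> U v \<noteq> {}"
    using assms(1,3) by (auto simp: Uscheme_def Kspace_def)
  show "L \<noteq> {}" "K \<noteq> {}" using L(1) assms(2) by simp_all
  show "\<exists>x\<in>K. dist y x \<le> 2*\<delta>" if y: "y \<in> L" for y
  proof -
    obtain v where v: "v \<in> Iset a (2*m)" "y \<in> U v" using L(2) y by blast
    then have "dist y (p v) < \<delta>" using near by (fastforce simp: dist_commute)
    then have "dist y (p v) \<le> 2*\<delta>" using zero_le_dist[of y "p v"] by linarith
    then show ?thesis using near[OF v(1)] by blast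
  qed
  show "\<exists>y\<in>L. dist x y \<le> 2*\<delta>" if x: "x \<in> K" for x
  proof -
    obtain v where v: "v \<in> Iset a (2*m)" "dist (p v) x < \<delta>" using net x by auto
    obtain y where y: "y \<in> L" "y \<in> U v" using L(3)[OF v(1)] by blast
    then have "dist (p v) y < \<delta>" using near[OF v(1)] by auto
    then have "dist x y \<le> 2*\<delta>" using v(2) dist_triangle[of x y "p v"] by (simp add: dist_commute)
    then show ?thesis using y(1) by blast
  qed
qed

lemma odd_level_centers:
  fixes W :: "nat list \<Rightarrow> 'a::{metric_space,perfect_space} set"
  assumes "compact K" and W: "\<forall>s\<in>Iset a m. open (W s) \<and> K \<inter> W s \<noteq> {}"
    and cover: "K \<subseteq> (\<Union>s\<in>Iset a m. W s)" and "0 < \<delta>"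
  obtains a' c \<rho> y where "\<forall>j\<le>m. a' j = a j" "growth a' (m+1)" "growth a' (m+2)" "0 < \<rho>"
    "\<forall>u\<in>Iset a' (m+1). ball (c u) \<rho> \<subseteq> W (butlast u) \<inter> ball (y u) \<delta> \<and> y u \<in> K"
    "\<forall>u\<in>Iset a' (m+1). \<forall>v\<in>Iset a' (m+1). u \<noteq> v \<longrightarrow> \<rho> < dist (c u) (c v)"
    "K \<subseteq> (\<Union>u\<in>Iset a' (m+1). ball (y u) \<delta>)"
proof -
  have "\<exists>A\<^sub>0::nat. \<forall>A\<ge>A\<^sub>0. \<exists>x. (\<forall>j\<in>Iset a m. \<forall>i\<in>{1..A}. x j i \<in> K \<inter> W j) \<and>
           K \<subseteq> (\<Union>j\<in>Iset a m. \<Union>i\<in>{1..A}. ball (x j i) \<delta>)"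
    by (rule cell_targets[OF \<open>compact K\<close> finite_Iset cover]) (use W \<open>0 < \<delta>\<close> in simp_all)
  then obtain A\<^sub>0 :: nat where A\<^sub>0: "\<forall>A\<ge>A\<^sub>0. \<exists>x. (\<forall>j\<in>Iset a m. \<forall>i\<in>{1..A}. x j i \<in> K \<inter> W j) \<and>
           K \<subseteq> (\<Union>j\<in>Iset a m. \<Union>i\<in>{1..A}. ball (x j i) \<delta>)"
    ..
  obtain a' where a': "\<forall>j\<le>m. a' j = a j" "A\<^sub>0 \<le> a' (m+1)" "growth a' (m+1)" "growth a' (m+2)"
    using extend_sizes by blast
  obtain x where x: "\<forall>j\<in>Iset a m. \<forall>i\<in>{1..a' (m+1)}. x j i \<in> K \<inter> W j"
    and x_net: "K \<subseteq> (\<Union>j\<in>Iset a m. \<Union>i\<in>{1..a' (m+1)}. ball (x j i) \<delta>)"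
    using A\<^sub>0 a'(2) by blast
  define I\<^sub>1 where "I\<^sub>1 = Iset a' (m+1)"
  have I\<^sub>1: "u \<in> I\<^sub>1 \<longleftrightarrow> (\<exists>j\<in>Iset a m. \<exists>i\<in>{1..a' (m+1)}. u = j @ [i])" for u
    using Iset_cong[of m a' a] a'(1) unfolding I\<^sub>1_def by (simp add: Iset_Suc_iff)
  define y where "y u = x (butlast u) (last u)" for u
  have y: "y u \<in> K \<inter> W (butlast u)" "butlast u \<in> Iset a m" if "u \<in> I\<^sub>1" for u
    using that x unfolding I\<^sub>1 y_def by auto
  have cells: "open (W (butlast u) \<inter> ball (y u) \<delta>) \<and> W (butlast u) \<inter> ball (y u) \<delta> \<noteq> {}"
    if u: "u \<in> I\<^sub>1" for u
  proof -
    have "open (W (butlast u) \<inter> ball (y u) \<delta>)" using W y(2)[OF u] by (intro open_Int open_ball) blast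
    moreover have "y u \<in> W (butlast u) \<inter> ball (y u) \<delta>" using y(1)[OF u] \<open>0 < \<delta>\<close> by simp
    ultimately show ?thesis by blast
  qed
  have "\<exists>c \<rho>. 0 < \<rho> \<and> (\<forall>u\<in>I\<^sub>1. ball (c u) \<rho> \<subseteq> W (butlast u) \<inter> ball (y u) \<delta>) \<and>
      (\<forall>u\<in>I\<^sub>1. \<forall>v\<in>I\<^sub>1. u \<noteq> v \<longrightarrow> \<rho> < dist (c u) (c v))"
    unfolding I\<^sub>1_def by (rule separated_centers[OF finite_Iset]) (rule cells[unfolded I\<^sub>1_def])
  then obtain c \<rho> where "0 < \<rho>" and c_ball: "\<forall>u\<in>I\<^sub>1. ball (c u) \<rho> \<subseteq> W (butlast u) \<inter> ball (y u) \<delta>"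
    and c_sep: "\<forall>u\<in>I\<^sub>1. \<forall>v\<in>I\<^sub>1. u \<noteq> v \<longrightarrow> \<rho> < dist (c u) (c v)"
    by (elim exE conjE) (rule that)
  have c_y: "\<forall>u\<in>I\<^sub>1. ball (c u) \<rho> \<subseteq> W (butlast u) \<inter> ball (y u) \<delta> \<and> y u \<in> K"
    using c_ball y(1) by blast
  have y_net: "K \<subseteq> (\<Union>u\<in>I\<^sub>1. ball (y u) \<delta>)"
  proof
    fix z assume "z \<in> K"
    then obtain j i where ji: "j \<in> Iset a m" "i \<in> {1..a' (m+1)}" "z \<in> ball (x j i) \<delta>"
      using x_net by blast
    then have "j @ [i] \<in> I\<^sub>1" using I\<^sub>1 by blast
    moreover have "y (j @ [i]) = x j i" by (simp add: y_def)
    ultimately show "z \<in> (\<Union>u\<in>I\<^sub>1. ball (y u) \<delta>)" using ji(3) by (metis UN_iff)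
  qed
  show ?thesis
    using that[OF a'(1,3,4) \<open>0 < \<rho>\<close>] c_y c_sep y_net unfolding I\<^sub>1_def by blast
qed

text \<open>The construction: a balanced scheme of size \<open>n\<close> extends consistently to one of size
  \<open>n+1\<close> all of whose compact sets lie within Hausdorff distance \<open>e\<close> of a given
  \<open>K \<in> \<U>(\<pi>)\<close>: every new cell lies within \<open>e/4\<close> of a target in \<open>K\<close>, and the targets form
  an \<open>e/4\<close>-net of \<open>K\<close>.\<close>
lemma extension_near:
  fixes U :: "nat list \<Rightarrow> 'a::{metric_space,perfect_space} set"
  assumes bal: "balanced Psi n a U" and K: "K \<in> Uscheme n a U" and "0 < e"
  shows "\<exists>a' U'. balanced Psi (Suc n) a' U' \<and> consistent n a U a' U' \<and>
                 (\<forall>L\<in>Uscheme (Suc n) a' U'. hausdorff_dist K L < e)"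
proof -
  obtain W where W: "\<forall>s\<in>Iset a (2*n). open (W s) \<and> K \<inter> W s \<noteq> {} \<and> (0 < n \<longrightarrow> W s = U s)"
    and K_cover: "K \<subseteq> (\<Union>s\<in>Iset a (2*n). W s)"
    using scheme_cells[OF bal K] by blast
  have "compact K" "K \<noteq> {}" using K Uscheme_Kspace by (auto simp: Kspace_def)
  obtain a' c \<rho> y where a': "\<forall>j\<le>2*n. a' j = a j" "growth a' (2*n+1)" "growth a' (2*n+2)" and "0 < \<rho>"
    and c_ball: "\<forall>u\<in>Iset a' (2*n+1). ball (c u) \<rho> \<subseteq> W (butlast u) \<inter> ball (y u) (e/4) \<and> y u \<in> K"
    and c_sep: "\<forall>u\<in>Iset a' (2*n+1). \<forall>v\<in>Iset a' (2*n+1). u \<noteq> v \<longrightarrow> \<rho> < dist (c u) (c v)"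
    and y_net: "K \<subseteq> (\<Union>u\<in>Iset a' (2*n+1). ball (y u) (e/4))"
  proof -
    have cells: "\<forall>s\<in>Iset a (2*n). open (W s) \<and> K \<inter> W s \<noteq> {}" using W by blast
    have "0 < e/4" using \<open>0 < e\<close> by simp
    show ?thesis by (rule odd_level_centers[OF \<open>compact K\<close> cells K_cover \<open>0 < e/4\<close>]) (rule that)
  qed
  have nest: "cball (c u) (\<rho>/6) \<subseteq> U (butlast u)" if "0 < n" "u \<in> Iset a' (2*n+1)" for u
  proof -
    have "Iset a' (2*n) = Iset a (2*n)" by (rule Iset_cong) (use a'(1) in auto)
    then have "butlast u \<in> Iset a (2*n)" using butlast_Iset[of u a' "2*n"] that(2) by simp
    have "cball (c u) (\<rho>/6) \<subseteq> ball (c u) \<rho>" using \<open>0 < \<rho>\<close> by (auto simp: subset_iff)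
    also have "\<dots> \<subseteq> W (butlast u)" using c_ball that(2) by blast
    also have "\<dots> = U (butlast u)" using W \<open>butlast u \<in> Iset a (2*n)\<close> that(1) by blast
    finally show ?thesis .
  qed
  have "\<exists>U'. balanced Psi (Suc n) a' U' \<and> consistent n a U a' U' \<and>
      (\<forall>v\<in>Iset a' (2*n+2). U' v \<subseteq> ball (c (butlast v)) (\<rho>/6))"
  proof (rule balanced_extension_from_centers[OF bal _ a'(2,3)])
    show "6 * (\<rho>/6) < dist (c u) (c v)" if "u \<in> Iset a' (2*n+1)" "v \<in> Iset a' (2*n+1)" "u \<noteq> v" for u v
      using c_sep that by simp
  qed (use a'(1) \<open>0 < \<rho>\<close> nest in simp_all)
  then obtain U' where U': "balanced Psi (Suc n) a' U'" "consistent n a U a' U'"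
    and leaves: "\<forall>v\<in>Iset a' (2*n+2). U' v \<subseteq> ball (c (butlast v)) (\<rho>/6)"
    by (elim exE conjE) (rule that)
  have near: "U' v \<subseteq> ball (y (butlast v)) (e/4) \<and> y (butlast v) \<in> K" if v: "v \<in> Iset a' (2*Suc n)" for v
  proof -
    have u: "butlast v \<in> Iset a' (2*n+1)" using butlast_Iset[of v a' "2*n+1"] v by simp
    have "U' v \<subseteq> ball (c (butlast v)) (\<rho>/6)" using leaves v by simp
    also have "\<dots> \<subseteq> ball (c (butlast v)) \<rho>" using \<open>0 < \<rho>\<close> by (intro subset_ball) simp
    also have "\<dots> \<subseteq> ball (y (butlast v)) (e/4)" using c_ball u by blast
    finally show ?thesis using c_ball u by blast
  qed
  have net: "K \<subseteq> (\<Union>v\<in>Iset a' (2*Suc n). ball (y (butlast v)) (e/4))"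
  proof -
    have "u @ [1] \<in> Iset a' (2*Suc n)" if "u \<in> Iset a' (2*n+1)" for u
      using that a'(3) Iset_snoc[of u 1 a' "2*n+1"] by (simp add: growth_def)
    then have "(\<Union>u\<in>Iset a' (2*n+1). ball (y u) (e/4)) \<subseteq> (\<Union>v\<in>Iset a' (2*Suc n). ball (y (butlast v)) (e/4))"
      by (force simp del: append_assoc)
    then show ?thesis using y_net by blast
  qed
  have "hausdorff_dist K L < e" if "L \<in> Uscheme (Suc n) a' U'" for L
    using Uscheme_close[OF _ \<open>K \<noteq> {}\<close> that near net] \<open>0 < e\<close> by simp
  then show ?thesis using U' by blast
qed

text \<open>Lemma 4.10.\<close>
theorem lemma4p10:
  fixes Psi :: "nat \<Rightarrow> nat list"
    and n :: nat
    and a :: "nat \<Rightarrow> nat"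
    and U :: "nat list \<Rightarrow> 'a::{polish_space, perfect_space} set"
    and V :: "'a set set"
  assumes Psi_onto: "{xs. \<forall>x\<in>set xs. 0 < x} \<subseteq> Psi ` {m. odd m}"
    and Psi_len: "\<forall>m. odd m \<longrightarrow> length (Psi m) \<le> m"
    and bal: "balanced Psi n a U"
    and V_ne: "V \<noteq> {}"
    and V_open: "K_open V"
    and V_sub: "V \<subseteq> Uscheme n a U"
  shows "\<exists>a' U'. balanced Psi (Suc n) a' U' \<and> consistent n a U a' U'
                 \<and> Uscheme (Suc n) a' U' \<subseteq> V"
proof -
  obtain K e where "K \<in> V" "0 < e" and e_ball: "\<forall>L\<in>Kspace. hausdorff_dist K L < e \<longrightarrow> L \<in> V"
    using V_ne V_open unfolding K_open_def by blast
  then have "K \<in> Uscheme n a U" using V_sub by blast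
  then obtain a' U' where "balanced Psi (Suc n) a' U'" "consistent n a U a' U'"
    and close: "\<forall>L\<in>Uscheme (Suc n) a' U'. hausdorff_dist K L < e"
    using extension_near[OF bal _ \<open>0 < e\<close>] by blast
  moreover have "Uscheme (Suc n) a' U' \<subseteq> V"
    using close e_ball Uscheme_Kspace by blast
  ultimately show ?thesis by blast
qed

end
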